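(* (Completeness) Every valid sequent of $\text{HXPath}_{\rm D}$ is provable in the sequent calculus $\mathbf{G}$.
   Context: Syntax of $\text{HXPath}_{\rm D}$: fix pairwise disjoint sets $\mathsf{Prop}$ (propositions, countably infinite), $\mathsf{Nom}$ (nominals, countably infinite), $\mathsf{Mod}$ (modalities, finite), $\mathsf{Cmp}$ (comparisons, finite). Path expressions $\alpha,\beta ::= \mathsf{a} \mid i{:} \mid \varphi? \mid \alpha\beta$ and node expressions $\varphi,\psi ::= p \mid i \mid \bot \mid \varphi\to\psi \mid @_i\varphi \mid \langle \mathsf{a}\rangle\varphi \mid \langle\alpha =_{\mathsf{c}} \beta\rangle \mid \langle \alpha\neq_{\mathsf{c}}\beta\rangle$, with $p\in\mathsf{Prop}$, $i\in\mathsf{Nom}$, $\mathsf{a}\in\mathsf{Mod}$, $\mathsf{c}\in\mathsf{Cmp}$. Abbreviations: $\top:=\bot\to\bot$, $\neg\varphi:=\varphi\to\bot$, $\varphi\lor\psi := \neg\varphi\to\psi$, $\varphi\land\psi:=\neg(\varphi\to\neg\psi)$; $\epsilon:=\top?$; $\langle j{:}\rangle\varphi := @_j\varphi$, $\langle\psi?\rangle\varphi:=\psi\land\varphi$, $\langle\alpha\beta\rangle\varphi:=\langle\alpha\rangle\langle\beta\rangle\varphi$. The symbol $\blacktriangle$ stands for either $=_{\mathsf{c}}$ or $\neq_{\mathsf{c}}$ (for some $\mathsf{c}$). Models: $\mathcal{M}=\langle N,\{R_{\mathsf a}\}_{\mathsf a\in\mathsf{Mod}},\{\approx_{\mathsf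 c}\}_{\mathsf c\in\mathsf{Cmp}},g,V\rangle$ with $N\neq\emptyset$, each $R_{\mathsf a}\subseteq N\times N$, each $\approx_{\mathsf c}$ an equivalence relation on $N$, $g:\mathsf{Nom}\to N$, $V:\mathsf{Prop}\to 2^N$. Semantics: $\mathcal M,n,n'\Vdash \mathsf a$ iff $nR_{\mathsf a}n'$; $\mathcal M,n,n'\Vdash i{:}$ iff $g(i)=n'$; $\mathcal M,n,n'\Vdash\varphi?$ iff $n=n'$ and $\mathcal M,n\Vdash\varphi$; $\mathcal M,n,n'\Vdash\alpha\beta$ iff there is $n''$ with $\mathcal M,n,n''\Vdash\alpha$ and $\mathcal M,n'',n'\Vdash\beta$; $\mathcal M,n\Vdash p$ iff $n\in V(p)$; $\mathcal M,n\Vdash i$ iff $g(i)=n$; $\bot$ never holds; $\to$ classical; $\mathcal M,n\Vdash @_i\varphi$ iff $\mathcal M,g(i)\Vdash\varphi$; $\mathcal M,n\Vdash\langle\mathsf a\rangle\varphi$ iff some $n'$ has $nR_{\mathsf a}n'$ and $\mathcal M,n'\Vdash\varphi$; $\mathcal M,n\Vdash\langle\alpha=_{\mathsf c}\beta\rangle$ (resp. $\langle\alpha\neq_{\mathsf c}\beta\rangle$) iff there are $n',n''$ with $\mathcal M,n,n'\Vdash\alpha$, $\mathcal M,n,n''\Vdash\beta$ and $n'\approx_{\mathsf c}n''$ (resp. $n'\not\approx_{\mathsf c}n''$). Sequents: a sequent $\Gamma\vdash\Delta$ consists of finite (possibly empty) sets $\Gamma,\Delta$ of node expressions each of the form $\langle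 i{:}\blacktriangle j{:}\rangle$ or $@_i\varphi$. It is valid iff for every model $\mathcal M$ and node $n$, if $\mathcal M,n\Vdash\gamma$ for all $\gamma\in\Gamma$ then $\mathcal M,n\Vdash\delta$ for some $\delta\in\Delta$. Notation "$\varphi,\Gamma$" means $\{\varphi\}\cup\Gamma$. The calculus $\mathbf{G}$ (each rule written premisses $\Rightarrow$ conclusion): (Ax) axiom $\varphi,\Gamma\vdash\Delta,\varphi$ where $\varphi$ is of the form $@_ip$, $@_ij$ or $\langle i{:}=_{\mathsf c}j{:}\rangle$; ($\bot$) axiom $@_i\bot,\Gamma\vdash\Delta$; ($\to$L) $\Gamma\vdash\Delta,@_i\varphi$ and $@_i\psi,\Gamma\vdash\Delta$ $\Rightarrow$ $@_i(\varphi\to\psi),\Gamma\vdash\Delta$; ($\to$R) $@_i\varphi,\Gamma\vdash\Delta,@_i\psi\Rightarrow\Gamma\vdash\Delta,@_i(\varphi\to\psi)$; ($@$T) $@_ii,\Gamma\vdash\Delta\Rightarrow\Gamma\vdash\Delta$; ($@5$) $@_jk,@_ij,@_ik,\Gamma\vdash\Delta\Rightarrow @_ij,@_ik,\Gamma\vdash\Delta$; (Nom) $@_ij,\Gamma\vdash\Delta\Rightarrow\Gamma\vdash\Delta$, $j$ not in the conclusion; (S$_1$) $@_j\varphi,@_ij,@_i\varphi,\Gamma\vdash\Delta\Rightarrow @_ij,@_i\varphi,\Gamma\vdash\Delta$, $\varphi$ of the form $p$, $\bot$ or $\langle\mathsf a\rangle k$; (S$_2$) $@_i\langle\mathsf a\rangle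 k,@_jk,@_i\langle\mathsf a\rangle j,\Gamma\vdash\Delta\Rightarrow @_jk,@_i\langle\mathsf a\rangle j,\Gamma\vdash\Delta$; (S$_3$) $\langle j{:}=_{\mathsf c}k{:}\rangle,@_ij,\langle i{:}=_{\mathsf c}k{:}\rangle,\Gamma\vdash\Delta\Rightarrow @_ij,\langle i{:}=_{\mathsf c}k{:}\rangle,\Gamma\vdash\Delta$; ($@$L) $@_i\varphi,\Gamma\vdash\Delta\Rightarrow @_j@_i\varphi,\Gamma\vdash\Delta$; ($@$R) $\Gamma\vdash\Delta,@_i\varphi\Rightarrow\Gamma\vdash\Delta,@_j@_i\varphi$; ($\langle\mathsf a\rangle$L) $@_i\langle\mathsf a\rangle j,@_j\varphi,\Gamma\vdash\Delta\Rightarrow @_i\langle\mathsf a\rangle\varphi,\Gamma\vdash\Delta$, $j$ not in the conclusion; ($\langle\mathsf a\rangle$R) $@_i\langle\mathsf a\rangle j,\Gamma\vdash\Delta,@_i\langle\mathsf a\rangle\varphi,@_j\varphi\Rightarrow @_i\langle\mathsf a\rangle j,\Gamma\vdash\Delta,@_i\langle\mathsf a\rangle\varphi$; ($\langle\blacktriangle\rangle$L) $@_i\langle\alpha\rangle j,@_i\langle\beta\rangle k,\langle j{:}\blacktriangle k{:}\rangle,\Gamma\vdash\Delta\Rightarrow @_i\langle\alpha\blacktriangle\beta\rangle,\Gamma\vdash\Delta$, $j,k$ distinct and not in the conclusion; ($\langle\blacktriangle\rangle$R) $@_i\langle\alpha\rangle j,@_i\langle\beta\rangle k,\Gamma\vdash\Delta,@_i\langle\alpha\blacktriangle\beta\rangle,\langle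 j{:}\blacktriangle k{:}\rangle\Rightarrow @_i\langle\alpha\rangle j,@_i\langle\beta\rangle k,\Gamma\vdash\Delta,@_i\langle\alpha\blacktriangle\beta\rangle$; (EqT) $\langle i{:}=_{\mathsf c}i{:}\rangle,\Gamma\vdash\Delta\Rightarrow\Gamma\vdash\Delta$; (Eq5) $\langle j{:}=_{\mathsf c}k{:}\rangle,\langle i{:}=_{\mathsf c}j{:}\rangle,\langle i{:}=_{\mathsf c}k{:}\rangle,\Gamma\vdash\Delta\Rightarrow\langle i{:}=_{\mathsf c}j{:}\rangle,\langle i{:}=_{\mathsf c}k{:}\rangle,\Gamma\vdash\Delta$; (NEqL) $\Gamma\vdash\Delta,\langle i{:}=_{\mathsf c}j{:}\rangle\Rightarrow\langle i{:}\neq_{\mathsf c}j{:}\rangle,\Gamma\vdash\Delta$; (NEqR) $\langle i{:}=_{\mathsf c}j{:}\rangle,\Gamma\vdash\Delta\Rightarrow\Gamma\vdash\Delta,\langle i{:}\neq_{\mathsf c}j{:}\rangle$; (Cut) $\Gamma\vdash\Delta,\varphi$ and $\varphi,\Gamma'\vdash\Delta'\Rightarrow\Gamma,\Gamma'\vdash\Delta,\Delta'$; (WL) $\Gamma\vdash\Delta\Rightarrow\varphi,\Gamma\vdash\Delta$; (WR) $\Gamma\vdash\Delta\Rightarrow\Gamma\vdash\Delta,\varphi$. Here $@_i\langle\alpha\rangle j$ for a path $\alpha$ is understood via the abbreviations above. A derivation is a finite tree of sequents in which each non-leaf node is the conclusion of an instance of a rule of $\mathbf G$ whose premisses are its children.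 A sequent is provable in $\mathbf G$ if it is the root of a derivation all of whose leaves are instances of (Ax) or ($\bot$). *)

theory Defs
  imports Main "HOL-Library.Countable" "HOL-Library.Infinite_Typeclass"
begin

text \<open>'p = Prop, 'n = Nom, 'm = Mod, 'c = Cmp (disjoint by being distinct types).\<close>

datatype ('p, 'n, 'm, 'c) path =
    PMod 'm
  | PNom 'n
  | PTest "('p, 'n, 'm, 'c) node"
  | PComp "('p, 'n, 'm, 'c) path" "('p, 'n, 'm, 'c) path"
and ('p, 'n, 'm, 'c) node =
    NProp 'p
  | NNom 'n
  | NBot
  | NImp "('p, 'n, 'm, 'c) node" "('p, 'n, 'm, 'c) node"
  | NAt 'n "('p, 'n, 'm, 'c) node"
  | NDia 'm "('p, 'n, 'm, 'c) node"
  | NEq "('p, 'n, 'm, 'c) path" 'c "('p, 'n, 'm, 'c) path"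
  | NNeq "('p, 'n, 'm, 'c) path" 'c "('p, 'n, 'm, 'c) path"

definition NNeg :: "('p,'n,'m,'c) node \<Rightarrow> ('p,'n,'m,'c) node" where
  "NNeg \<phi> = NImp \<phi> NBot"

definition NConj :: "('p,'n,'m,'c) node \<Rightarrow> ('p,'n,'m,'c) node \<Rightarrow> ('p,'n,'m,'c) node" where
  "NConj \<phi> \<psi> = NNeg (NImp \<phi> (NNeg \<psi>))"

fun dia :: "('p,'n,'m,'c) path \<Rightarrow> ('p,'n,'m,'c) node \<Rightarrow> ('p,'n,'m,'c) node" where
  "dia (PMod a) \<phi> = NDia a \<phi>"
| "dia (PNom j) \<phi> = NAt j \<phi>"
| "dia (PTest \<psi>) \<phi> = NConj \<psi> \<phi>"
| "dia (PComp \<alpha> \<beta>) \<phi> = dia \<alpha> (dia \<beta> \<phi>)"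

fun cmp :: "bool \<Rightarrow> ('p,'n,'m,'c) path \<Rightarrow> 'c \<Rightarrow> ('p,'n,'m,'c) path \<Rightarrow> ('p,'n,'m,'c) node" where
  "cmp True \<alpha> c \<beta> = NEq \<alpha> c \<beta>"
| "cmp False \<alpha> c \<beta> = NNeq \<alpha> c \<beta>"

abbreviation eqn :: "'n \<Rightarrow> 'c \<Rightarrow> 'n \<Rightarrow> ('p,'n,'m,'c) node" where
  "eqn i c j \<equiv> NEq (PNom i) c (PNom j)"

abbreviation neqn :: "'n \<Rightarrow> 'c \<Rightarrow> 'n \<Rightarrow> ('p,'n,'m,'c) node" where
  "neqn i c j \<equiv> NNeq (PNom i) c (PNom j)"

fun noms_p :: "('p,'n,'m,'c) path \<Rightarrow> 'n set"
and noms_n :: "('p,'n,'m,'c) node \<Rightarrow> 'n set" where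
  "noms_p (PMod a) = {}"
| "noms_p (PNom i) = {i}"
| "noms_p (PTest \<phi>) = noms_n \<phi>"
| "noms_p (PComp \<alpha> \<beta>) = noms_p \<alpha> \<union> noms_p \<beta>"
| "noms_n (NProp p) = {}"
| "noms_n (NNom i) = {i}"
| "noms_n NBot = {}"
| "noms_n (NImp \<phi> \<psi>) = noms_n \<phi> \<union> noms_n \<psi>"
| "noms_n (NAt i \<phi>) = insert i (noms_n \<phi>)"
| "noms_n (NDia a \<phi>) = noms_n \<phi>"
| "noms_n (NEq \<alpha> c \<beta>) = noms_p \<alpha> \<union> noms_p \<beta>"
| "noms_n (NNeq \<alpha> c \<beta>) = noms_p \<alpha> \<union> noms_p \<beta>"

definition noms_seq :: "('p,'n,'m,'c) node set \<Rightarrow> ('p,'n,'m,'c) node set \<Rightarrow> 'n set" where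
  "noms_seq \<Gamma> \<Delta> = (\<Union>\<phi>\<in>\<Gamma> \<union> \<Delta>. noms_n \<phi>)"

record ('w, 'p, 'n, 'm, 'c) model =
  Nodes :: "'w set"
  Rel   :: "'m \<Rightarrow> 'w \<Rightarrow> 'w \<Rightarrow> bool"
  Eqv   :: "'c \<Rightarrow> 'w \<Rightarrow> 'w \<Rightarrow> bool"
  gval  :: "'n \<Rightarrow> 'w"
  Val   :: "'p \<Rightarrow> 'w set"

definition is_model :: "('w, 'p, 'n, 'm, 'c) model \<Rightarrow> bool" where
  "is_model M \<longleftrightarrow>
     Nodes M \<noteq> {}
   \<and> (\<forall>a x y. Rel M a x y \<longrightarrow> x \<in> Nodes M \<and> y \<in> Nodes M)
   \<and> (\<forall>c. equiv (Nodes M) {(x, y). Eqv M c x y})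
   \<and> (\<forall>i. gval M i \<in> Nodes M)
   \<and> (\<forall>p. Val M p \<subseteq> Nodes M)"

fun psem :: "('w, 'p, 'n, 'm, 'c) model \<Rightarrow> 'w \<Rightarrow> 'w \<Rightarrow> ('p,'n,'m,'c) path \<Rightarrow> bool"
and nsem :: "('w, 'p, 'n, 'm, 'c) model \<Rightarrow> 'w \<Rightarrow> ('p,'n,'m,'c) node \<Rightarrow> bool" where
  "psem M n n' (PMod a) \<longleftrightarrow> Rel M a n n'"
| "psem M n n' (PNom i) \<longleftrightarrow> gval M i = n'"
| "psem M n n' (PTest \<phi>) \<longleftrightarrow> n = n' \<and> nsem M n \<phi>"
| "psem M n n' (PComp \<alpha> \<beta>) \<longleftrightarrow> (\<exists>n''\<in>Nodes M. psem M n n'' \<alpha> \<and> psem M n'' n' \<beta>)"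
| "nsem M n (NProp p) \<longleftrightarrow> n \<in> Val M p"
| "nsem M n (NNom i) \<longleftrightarrow> gval M i = n"
| "nsem M n NBot \<longleftrightarrow> False"
| "nsem M n (NImp \<phi> \<psi>) \<longleftrightarrow> (nsem M n \<phi> \<longrightarrow> nsem M n \<psi>)"
| "nsem M n (NAt i \<phi>) \<longleftrightarrow> nsem M (gval M i) \<phi>"
| "nsem M n (NDia a \<phi>) \<longleftrightarrow> (\<exists>n'\<in>Nodes M. Rel M a n n' \<and> nsem M n' \<phi>)"
| "nsem M n (NEq \<alpha> c \<beta>) \<longleftrightarrow>
     (\<exists>n'\<in>Nodes M. \<exists>n''\<in>Nodes M. psem M n n' \<alpha> \<and> psem M n n'' \<beta> \<and> Eqv M c n' n'')"
| "nsem M n (NNeq \<alpha> c \<beta>) \<longleftrightarrow>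
     (\<exists>n'\<in>Nodes M. \<exists>n''\<in>Nodes M. psem M n n' \<alpha> \<and> psem M n n'' \<beta> \<and> \<not> Eqv M c n' n'')"

definition seq_formula :: "('p,'n,'m,'c) node \<Rightarrow> bool" where
  "seq_formula \<phi> \<longleftrightarrow>
     (\<exists>i \<psi>. \<phi> = NAt i \<psi>) \<or> (\<exists>i c j. \<phi> = eqn i c j \<or> \<phi> = neqn i c j)"

definition is_sequent :: "('p,'n,'m,'c) node set \<Rightarrow> ('p,'n,'m,'c) node set \<Rightarrow> bool" where
  "is_sequent \<Gamma> \<Delta> \<longleftrightarrow> finite \<Gamma> \<and> finite \<Delta> \<and> (\<forall>\<phi>\<in>\<Gamma> \<union> \<Delta>. seq_formula \<phi>)"

text \<open>Models are taken with carrier a subset of nat: HOL cannot quantify over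
  all types inside a formula (the language is countable, so countable
  models suffice by downward Loewenheim-Skolem).\<close>
definition valid_seq :: "('p,'n,'m,'c) node set \<Rightarrow> ('p,'n,'m,'c) node set \<Rightarrow> bool" where
  "valid_seq \<Gamma> \<Delta> \<longleftrightarrow>
     (\<forall>M :: (nat, 'p, 'n, 'm, 'c) model. is_model M \<longrightarrow>
        (\<forall>n\<in>Nodes M. (\<forall>\<gamma>\<in>\<Gamma>. nsem M n \<gamma>) \<longrightarrow> (\<exists>\<delta>\<in>\<Delta>. nsem M n \<delta>)))"

inductive G_prov :: "('p,'n,'m,'c) node set \<Rightarrow> ('p,'n,'m,'c) node set \<Rightarrow> bool" where
  Ax: "\<lbrakk> is_sequent (insert \<phi> \<Gamma>) (insert \<phi> \<Delta>);
         (\<exists>i p. \<phi> = NAt i (NProp p)) \<or> (\<exists>i j. \<phi> = NAt i (NNom j)) \<or> (\<exists>i c j. \<phi> = eqn i c j) \<rbrakk>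
       \<Longrightarrow> G_prov (insert \<phi> \<Gamma>) (insert \<phi> \<Delta>)"
| Bot: "is_sequent (insert (NAt i NBot) \<Gamma>) \<Delta> \<Longrightarrow> G_prov (insert (NAt i NBot) \<Gamma>) \<Delta>"
| ImpL: "\<lbrakk> is_sequent (insert (NAt i (NImp \<phi> \<psi>)) \<Gamma>) \<Delta>;
          G_prov \<Gamma> (insert (NAt i \<phi>) \<Delta>); G_prov (insert (NAt i \<psi>) \<Gamma>) \<Delta> \<rbrakk>
        \<Longrightarrow> G_prov (insert (NAt i (NImp \<phi> \<psi>)) \<Gamma>) \<Delta>"
| ImpR: "\<lbrakk> is_sequent \<Gamma> (insert (NAt i (NImp \<phi> \<psi>)) \<Delta>);
          G_prov (insert (NAt i \<phi>) \<Gamma>) (insert (NAt i \<psi>) \<Delta>) \<rbrakk>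
        \<Longrightarrow> G_prov \<Gamma> (insert (NAt i (NImp \<phi> \<psi>)) \<Delta>)"
| AtT: "\<lbrakk> is_sequent \<Gamma> \<Delta>; G_prov (insert (NAt i (NNom i)) \<Gamma>) \<Delta> \<rbrakk> \<Longrightarrow> G_prov \<Gamma> \<Delta>"
| At5: "\<lbrakk> is_sequent (insert (NAt i (NNom j)) (insert (NAt i (NNom k)) \<Gamma>)) \<Delta>;
         G_prov (insert (NAt j (NNom k)) (insert (NAt i (NNom j)) (insert (NAt i (NNom k)) \<Gamma>))) \<Delta> \<rbrakk>
       \<Longrightarrow> G_prov (insert (NAt i (NNom j)) (insert (NAt i (NNom k)) \<Gamma>)) \<Delta>"
| Nom: "\<lbrakk> is_sequent \<Gamma> \<Delta>; j \<notin> noms_seq \<Gamma> \<Delta>; G_prov (insert (NAt i (NNom j)) \<Gamma>) \<Delta> \<rbrakk>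
       \<Longrightarrow> G_prov \<Gamma> \<Delta>"
| S1: "\<lbrakk> is_sequent (insert (NAt i (NNom j)) (insert (NAt i \<phi>) \<Gamma>)) \<Delta>;
        (\<exists>p. \<phi> = NProp p) \<or> \<phi> = NBot \<or> (\<exists>a k. \<phi> = NDia a (NNom k));
        G_prov (insert (NAt j \<phi>) (insert (NAt i (NNom j)) (insert (NAt i \<phi>) \<Gamma>))) \<Delta> \<rbrakk>
      \<Longrightarrow> G_prov (insert (NAt i (NNom j)) (insert (NAt i \<phi>) \<Gamma>)) \<Delta>"
| S2: "\<lbrakk> is_sequent (insert (NAt j (NNom k)) (insert (NAt i (NDia a (NNom j))) \<Gamma>)) \<Delta>;
        G_prov (insert (NAt i (NDia a (NNom k))) (insert (NAt j (NNom k))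
                  (insert (NAt i (NDia a (NNom j))) \<Gamma>))) \<Delta> \<rbrakk>
      \<Longrightarrow> G_prov (insert (NAt j (NNom k)) (insert (NAt i (NDia a (NNom j))) \<Gamma>)) \<Delta>"
| S3: "\<lbrakk> is_sequent (insert (NAt i (NNom j)) (insert (eqn i c k) \<Gamma>)) \<Delta>;
        G_prov (insert (eqn j c k) (insert (NAt i (NNom j)) (insert (eqn i c k) \<Gamma>))) \<Delta> \<rbrakk>
      \<Longrightarrow> G_prov (insert (NAt i (NNom j)) (insert (eqn i c k) \<Gamma>)) \<Delta>"
| AtL: "\<lbrakk> is_sequent (insert (NAt j (NAt i \<phi>)) \<Gamma>) \<Delta>; G_prov (insert (NAt i \<phi>) \<Gamma>) \<Delta> \<rbrakk>
       \<Longrightarrow> G_prov (insert (NAt j (NAt i \<phi>)) \<Gamma>) \<Delta>"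
| AtR: "\<lbrakk> is_sequent \<Gamma> (insert (NAt j (NAt i \<phi>)) \<Delta>); G_prov \<Gamma> (insert (NAt i \<phi>) \<Delta>) \<rbrakk>
       \<Longrightarrow> G_prov \<Gamma> (insert (NAt j (NAt i \<phi>)) \<Delta>)"
| DiaL: "\<lbrakk> is_sequent (insert (NAt i (NDia a \<phi>)) \<Gamma>) \<Delta>;
          j \<notin> noms_seq (insert (NAt i (NDia a \<phi>)) \<Gamma>) \<Delta>;
          G_prov (insert (NAt i (NDia a (NNom j))) (insert (NAt j \<phi>) \<Gamma>)) \<Delta> \<rbrakk>
        \<Longrightarrow> G_prov (insert (NAt i (NDia a \<phi>)) \<Gamma>) \<Delta>"
| DiaR: "\<lbrakk> is_sequent (insert (NAt i (NDia a (NNom j))) \<Gamma>) (insert (NAt i (NDia a \<phi>)) \<Delta>);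
          G_prov (insert (NAt i (NDia a (NNom j))) \<Gamma>) (insert (NAt i (NDia a \<phi>)) (insert (NAt j \<phi>) \<Delta>)) \<rbrakk>
        \<Longrightarrow> G_prov (insert (NAt i (NDia a (NNom j))) \<Gamma>) (insert (NAt i (NDia a \<phi>)) \<Delta>)"
| CmpL: "\<lbrakk> is_sequent (insert (NAt i (cmp b \<alpha> c \<beta>)) \<Gamma>) \<Delta>;
          j \<noteq> k;
          j \<notin> noms_seq (insert (NAt i (cmp b \<alpha> c \<beta>)) \<Gamma>) \<Delta>;
          k \<notin> noms_seq (insert (NAt i (cmp b \<alpha> c \<beta>)) \<Gamma>) \<Delta>;
          G_prov (insert (NAt i (dia \<alpha> (NNom j))) (insert (NAt i (dia \<beta> (NNom k)))
                    (insert (cmp b (PNom j) c (PNom k)) \<Gamma>))) \<Delta> \<rbrakk>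
        \<Longrightarrow> G_prov (insert (NAt i (cmp b \<alpha> c \<beta>)) \<Gamma>) \<Delta>"
| CmpR: "\<lbrakk> is_sequent (insert (NAt i (dia \<alpha> (NNom j))) (insert (NAt i (dia \<beta> (NNom k))) \<Gamma>))
                      (insert (NAt i (cmp b \<alpha> c \<beta>)) \<Delta>);
          G_prov (insert (NAt i (dia \<alpha> (NNom j))) (insert (NAt i (dia \<beta> (NNom k))) \<Gamma>))
                 (insert (NAt i (cmp b \<alpha> c \<beta>)) (insert (cmp b (PNom j) c (PNom k)) \<Delta>)) \<rbrakk>
        \<Longrightarrow> G_prov (insert (NAt i (dia \<alpha> (NNom j))) (insert (NAt i (dia \<beta> (NNom k))) \<Gamma>))
                   (insert (NAt i (cmp b \<alpha> c \<beta>)) \<Delta>)"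
| EqT: "\<lbrakk> is_sequent \<Gamma> \<Delta>; G_prov (insert (eqn i c i) \<Gamma>) \<Delta> \<rbrakk> \<Longrightarrow> G_prov \<Gamma> \<Delta>"
| Eq5: "\<lbrakk> is_sequent (insert (eqn i c j) (insert (eqn i c k) \<Gamma>)) \<Delta>;
         G_prov (insert (eqn j c k) (insert (eqn i c j) (insert (eqn i c k) \<Gamma>))) \<Delta> \<rbrakk>
       \<Longrightarrow> G_prov (insert (eqn i c j) (insert (eqn i c k) \<Gamma>)) \<Delta>"
| NEqL: "\<lbrakk> is_sequent (insert (neqn i c j) \<Gamma>) \<Delta>; G_prov \<Gamma> (insert (eqn i c j) \<Delta>) \<rbrakk>
        \<Longrightarrow> G_prov (insert (neqn i c j) \<Gamma>) \<Delta>"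
| NEqR: "\<lbrakk> is_sequent \<Gamma> (insert (neqn i c j) \<Delta>); G_prov (insert (eqn i c j) \<Gamma>) \<Delta> \<rbrakk>
        \<Longrightarrow> G_prov \<Gamma> (insert (neqn i c j) \<Delta>)"
| Cut: "\<lbrakk> is_sequent (\<Gamma> \<union> \<Gamma>') (\<Delta> \<union> \<Delta>'); G_prov \<Gamma> (insert \<phi> \<Delta>); G_prov (insert \<phi> \<Gamma>') \<Delta>' \<rbrakk>
       \<Longrightarrow> G_prov (\<Gamma> \<union> \<Gamma>') (\<Delta> \<union> \<Delta>')"
| WL: "\<lbrakk> is_sequent (insert \<phi> \<Gamma>) \<Delta>; G_prov \<Gamma> \<Delta> \<rbrakk> \<Longrightarrow> G_prov (insert \<phi> \<Gamma>) \<Delta>"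
| WR: "\<lbrakk> is_sequent \<Gamma> (insert \<phi> \<Delta>); G_prov \<Gamma> \<Delta> \<rbrakk> \<Longrightarrow> G_prov \<Gamma> (insert \<phi> \<Delta>)"

end

theory Submission
  imports Defs "HOL-Library.Product_Order"
begin

(* Suppose Gamma |- Delta is not derivable. Enumerate all rule instances so that each occurs
   infinitely often and apply them backwards one after another, always moving to a premise that
   is still underivable; one exists because a rule instance whose premises are all derivable has
   a derivable conclusion. The union (L, R) of the resulting chain of underivable sequents is
   saturated: it is closed under every rule read backwards, with fresh witnesses for the left
   rules of <a> and <alpha =c beta>, and by Cut every sequent formula lies in L or in R.
   Identifying nominals i, j with @_i j in L yields a canonical model in which @_i phi holds if it
   is in L and fails if it is in R, so the model refutes Gamma |- Delta. *)

instance node and path :: (countable, countable, countable, countable) countable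
  by countable_datatype

lemma finite_noms:
  fixes \<alpha> :: "('p, 'n, 'm, 'c) path" and \<phi> :: "('p, 'n, 'm, 'c) node"
  shows "finite (noms_p \<alpha>)" "finite (noms_n \<phi>)"
  by (induction \<alpha> and \<phi>) auto

lemma finite_noms_seq: "is_sequent \<Gamma> \<Delta> \<Longrightarrow> finite (noms_seq \<Gamma> \<Delta>)"
  unfolding noms_seq_def is_sequent_def using finite_noms by auto

definition fresh :: "'n::infinite set \<Rightarrow> 'n" where
  "fresh S = (SOME j. j \<notin> S)"

lemma fresh_notin: "finite S \<Longrightarrow> fresh S \<notin> S"
  unfolding fresh_def by (rule someI_ex) (metis ex_new_if_finite infinite_UNIV)

lemma seq_formula_simps [simp]:
  "seq_formula (NAt i \<phi>)" "seq_formula (eqn i c j)" "seq_formula (neqn i c j)"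
  "seq_formula (cmp b (PNom i) c (PNom j))"
  by (cases b; simp add: seq_formula_def)+

lemma is_sequent_insert [simp]:
  "is_sequent (insert \<phi> \<Gamma>) \<Delta> \<longleftrightarrow> seq_formula \<phi> \<and> is_sequent \<Gamma> \<Delta>"
  "is_sequent \<Gamma> (insert \<phi> \<Delta>) \<longleftrightarrow> seq_formula \<phi> \<and> is_sequent \<Gamma> \<Delta>"
  by (auto simp: is_sequent_def)

section \<open>Backward proof search\<close>

type_synonym ('p, 'n, 'm, 'c) sequent = "('p, 'n, 'm, 'c) node set \<times> ('p, 'n, 'm, 'c) node set"

datatype ('p, 'n, 'm, 'c) rule_instance =
    TAtT 'n | TEqT 'n 'c | TAt5 'n 'n 'n | TS1 'n 'n "('p, 'n, 'm, 'c) node" | TS2 'n 'n 'n 'm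
  | TS3 'n 'n 'n 'c | TEq5 'n 'n 'n 'c
  | TImpL 'n "('p, 'n, 'm, 'c) node" "('p, 'n, 'm, 'c) node"
  | TImpR 'n "('p, 'n, 'm, 'c) node" "('p, 'n, 'm, 'c) node"
  | TAtL 'n 'n "('p, 'n, 'm, 'c) node" | TAtR 'n 'n "('p, 'n, 'm, 'c) node"
  | TDiaL 'n 'm "('p, 'n, 'm, 'c) node" | TDiaR 'n 'm 'n "('p, 'n, 'm, 'c) node"
  | TCmpL 'n bool "('p, 'n, 'm, 'c) path" 'c "('p, 'n, 'm, 'c) path"
  | TCmpR 'n "('p, 'n, 'm, 'c) path" "('p, 'n, 'm, 'c) path" 'n 'n bool 'c
  | TNEqL 'n 'c 'n | TNEqR 'n 'c 'n | TCut "('p, 'n, 'm, 'c) node"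

instance rule_instance :: (countable, countable, countable, countable) countable
  by countable_datatype

(* The conclusion of the instance is G |- D itself: its principal formulas must already occur
   there, so every premise extends G |- D; the empty list means that the instance does not apply. *)
fun rule_premises :: "('p, 'n::infinite, 'm, 'c) rule_instance \<Rightarrow> ('p, 'n, 'm, 'c) sequent
    \<Rightarrow> ('p, 'n, 'm, 'c) sequent list" where
  "rule_premises (TAtT i) (G, D) = [(insert (NAt i (NNom i)) G, D)]"
| "rule_premises (TEqT i c) (G, D) = [(insert (eqn i c i) G, D)]"
| "rule_premises (TAt5 i j k) (G, D) =
    (if NAt i (NNom j) \<in> G \<and> NAt i (NNom k) \<in> G then [(insert (NAt j (NNom k)) G, D)] else [])"
| "rule_premises (TS1 i j \<phi>) (G, D) =
    (if NAt i (NNom j) \<in> G \<and> NAt i \<phi> \<in> G \<and>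
        ((\<exists>p. \<phi> = NProp p) \<or> \<phi> = NBot \<or> (\<exists>a k. \<phi> = NDia a (NNom k)))
     then [(insert (NAt j \<phi>) G, D)] else [])"
| "rule_premises (TS2 i j k a) (G, D) =
    (if NAt j (NNom k) \<in> G \<and> NAt i (NDia a (NNom j)) \<in> G
     then [(insert (NAt i (NDia a (NNom k))) G, D)] else [])"
| "rule_premises (TS3 i j k c) (G, D) =
    (if NAt i (NNom j) \<in> G \<and> eqn i c k \<in> G then [(insert (eqn j c k) G, D)] else [])"
| "rule_premises (TEq5 i j k c) (G, D) =
    (if eqn i c j \<in> G \<and> eqn i c k \<in> G then [(insert (eqn j c k) G, D)] else [])"
| "rule_premises (TImpL i \<phi> \<psi>) (G, D) =
    (if NAt i (NImp \<phi> \<psi>) \<in> G then [(G, insert (NAt i \<phi>) D), (insert (NAt i \<psi>) G, D)] else [])"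
| "rule_premises (TImpR i \<phi> \<psi>) (G, D) =
    (if NAt i (NImp \<phi> \<psi>) \<in> D then [(insert (NAt i \<phi>) G, insert (NAt i \<psi>) D)] else [])"
| "rule_premises (TAtL j i \<phi>) (G, D) =
    (if NAt j (NAt i \<phi>) \<in> G then [(insert (NAt i \<phi>) G, D)] else [])"
| "rule_premises (TAtR j i \<phi>) (G, D) =
    (if NAt j (NAt i \<phi>) \<in> D then [(G, insert (NAt i \<phi>) D)] else [])"
| "rule_premises (TDiaL i a \<phi>) (G, D) =
    (let j = fresh (noms_seq G D) in
     if NAt i (NDia a \<phi>) \<in> G then [(insert (NAt i (NDia a (NNom j))) (insert (NAt j \<phi>) G), D)]
     else [])"
| "rule_premises (TDiaR i a j \<phi>) (G, D) =
    (if NAt i (NDia a (NNom j)) \<in> G \<and> NAt i (NDia a \<phi>) \<in> D then [(G, insert (NAt j \<phi>) D)] else [])"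
| "rule_premises (TCmpL i b \<alpha> c \<beta>) (G, D) =
    (let j = fresh (noms_seq G D); k = fresh (insert j (noms_seq G D)) in
     if NAt i (cmp b \<alpha> c \<beta>) \<in> G
     then [(insert (NAt i (dia \<alpha> (NNom j))) (insert (NAt i (dia \<beta> (NNom k)))
              (insert (cmp b (PNom j) c (PNom k)) G)), D)]
     else [])"
| "rule_premises (TCmpR i \<alpha> \<beta> j k b c) (G, D) =
    (if NAt i (dia \<alpha> (NNom j)) \<in> G \<and> NAt i (dia \<beta> (NNom k)) \<in> G \<and> NAt i (cmp b \<alpha> c \<beta>) \<in> D
     then [(G, insert (cmp b (PNom j) c (PNom k)) D)] else [])"
| "rule_premises (TNEqL i c j) (G, D) = (if neqn i c j \<in> G then [(G, insert (eqn i c j) D)] else [])"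
| "rule_premises (TNEqR i c j) (G, D) = (if neqn i c j \<in> D then [(insert (eqn i c j) G, D)] else [])"
| "rule_premises (TCut \<phi>) (G, D) = (if seq_formula \<phi> then [(G, insert \<phi> D), (insert \<phi> G, D)] else [])"

lemma premises_extend:
  assumes "is_sequent (fst GD) (snd GD)" and "GD' \<in> set (rule_premises t GD)"
  shows "is_sequent (fst GD') (snd GD') \<and> GD \<le> GD'"
  using assms by (cases GD; cases GD'; cases t) (auto simp: Let_def less_eq_prod_def split: if_splits)

lemma G_prov_if_premises:
  assumes "is_sequent G D" and "rule_premises t (G, D) \<noteq> []"
    and "\<forall>(G', D') \<in> set (rule_premises t (G, D)). G_prov G' D'"
  shows "G_prov G D"
proof (cases t)
  case (TAtT i) with assms show ?thesis by (auto intro: AtT)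
next
  case (TEqT i c) with assms show ?thesis by (auto intro: EqT)
next
  case (TAt5 i j k) with assms show ?thesis
    using At5[of i j k G D] by (auto simp: insert_absorb split: if_splits)
next
  case (TS1 i j \<phi>) with assms show ?thesis
    using S1[of i j \<phi> G D] by (auto simp: insert_absorb split: if_splits)
next
  case (TS2 i j k a) with assms show ?thesis
    using S2[of j k i a G D] by (auto simp: insert_absorb split: if_splits)
next
  case (TS3 i j k c) with assms show ?thesis
    using S3[of i j c k G D] by (auto simp: insert_absorb split: if_splits)
next
  case (TEq5 i j k c) with assms show ?thesis
    using Eq5[of i c j k G D] by (auto simp: insert_absorb split: if_splits)
next
  case (TImpL i \<phi> \<psi>) with assms show ?thesis
    using ImpL[of i \<phi> \<psi> G D] by (auto simp: insert_absorb split: if_splits)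
next
  case (TImpR i \<phi> \<psi>) with assms show ?thesis
    using ImpR[of G i \<phi> \<psi> D] by (auto simp: insert_absorb split: if_splits)
next
  case (TAtL j i \<phi>) with assms show ?thesis
    using AtL[of j i \<phi> G D] by (auto simp: insert_absorb split: if_splits)
next
  case (TAtR j i \<phi>) with assms show ?thesis
    using AtR[of G j i \<phi> D] by (auto simp: insert_absorb split: if_splits)
next
  case (TDiaL i a \<phi>)
  have "fresh (noms_seq G D) \<notin> noms_seq G D"
    using assms(1) by (simp add: fresh_notin finite_noms_seq)
  with TDiaL assms show ?thesis
    using DiaL[of i a \<phi> G D "fresh (noms_seq G D)"] by (auto simp: insert_absorb Let_def split: if_splits)
next
  case (TDiaR i a j \<phi>) with assms show ?thesis
    using DiaR[of i a j G \<phi> D] by (auto simp: insert_absorb split: if_splits)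
next
  case (TCmpL i b \<alpha> c \<beta>)
  define j where "j = fresh (noms_seq G D)"
  define k where "k = fresh (insert j (noms_seq G D))"
  have "j \<notin> noms_seq G D" "k \<notin> insert j (noms_seq G D)"
    unfolding j_def k_def using assms(1) by (intro fresh_notin; simp add: finite_noms_seq)+
  with TCmpL assms show ?thesis
    using CmpL[of i b \<alpha> c \<beta> G D j k]
    by (auto simp: insert_absorb Let_def j_def[symmetric] k_def[symmetric] split: if_splits)
next
  case (TCmpR i \<alpha> \<beta> j k b c) with assms show ?thesis
    using CmpR[of i \<alpha> j \<beta> k G b c D] by (auto simp: insert_absorb split: if_splits)
next
  case (TNEqL i c j) with assms show ?thesis
    using NEqL[of i c j G D] by (auto simp: insert_absorb split: if_splits)
next
  case (TNEqR i c j) with assms show ?thesis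
    using NEqR[of G i c j D] by (auto simp: insert_absorb split: if_splits)
next
  case (TCut \<phi>) with assms show ?thesis
    using Cut[of G G D D \<phi>] by (auto split: if_splits)
qed

definition underivable :: "('p, 'n, 'm, 'c) sequent \<Rightarrow> bool" where
  "underivable GD \<longleftrightarrow> is_sequent (fst GD) (snd GD) \<and> \<not> G_prov (fst GD) (snd GD)"

definition step :: "('p, 'n::infinite, 'm, 'c) rule_instance \<Rightarrow> ('p, 'n, 'm, 'c) sequent
    \<Rightarrow> ('p, 'n, 'm, 'c) sequent" where
  "step t GD =
    (if \<exists>GD' \<in> set (rule_premises t GD). underivable GD'
     then SOME GD'. GD' \<in> set (rule_premises t GD) \<and> underivable GD' else GD)"

lemma step_to_underivable_premise:
  assumes "\<exists>GD' \<in> set (rule_premises t GD). underivable GD'"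
  shows "step t GD \<in> set (rule_premises t GD) \<and> underivable (step t GD)"
proof -
  let ?GD' = "SOME GD'. GD' \<in> set (rule_premises t GD) \<and> underivable GD'"
  have "?GD' \<in> set (rule_premises t GD) \<and> underivable ?GD'"
    by (rule someI_ex) (use assms in blast)
  with assms show ?thesis by (simp add: step_def)
qed

lemma step_underivable:
  assumes "underivable GD" shows "underivable (step t GD) \<and> GD \<le> step t GD"
proof (cases "\<exists>GD' \<in> set (rule_premises t GD). underivable GD'")
  case True
  then have "step t GD \<in> set (rule_premises t GD)" and "underivable (step t GD)"
    using step_to_underivable_premise by blast+
  with assms show ?thesis
    using premises_extend[of GD "step t GD" t] by (simp add: underivable_def)
qed (simp add: assms step_def)

lemma step_in_premises:
  assumes "underivable GD" and "rule_premises t GD \<noteq> []"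
  shows "step t GD \<in> set (rule_premises t GD)"
proof (rule ccontr)
  assume "step t GD \<notin> set (rule_premises t GD)"
  with assms(1) have "\<forall>(G', D') \<in> set (rule_premises t GD). G_prov G' D'"
    using step_to_underivable_premise premises_extend[of GD _ t]
    by (fastforce simp: underivable_def)
  with assms G_prov_if_premises[of "fst GD" "snd GD" t] show False
    by (simp add: underivable_def)
qed

definition schedule :: "nat \<Rightarrow> ('p::countable, 'n::countable, 'm::countable, 'c::countable) rule_instance" where
  "schedule n = from_nat (fst (prod_decode n))"

lemma schedule_recurs: "\<exists>m\<ge>n. schedule m = t"
  by (rule exI[of _ "prod_encode (to_nat t, n)"]) (simp add: schedule_def le_prod_encode_2)

primrec chain :: "('p::countable, 'n::{countable, infinite}, 'm::countable, 'c::countable) sequent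
    \<Rightarrow> nat \<Rightarrow> ('p, 'n, 'm, 'c) sequent" where
  "chain GD 0 = GD"
| "chain GD (Suc n) = step (schedule n) (chain GD n)"

section \<open>Saturation of the limit sequent\<close>

locale underivable_root =
  fixes \<Gamma> \<Delta> :: "('p::countable, 'n::{countable, infinite}, 'm::countable, 'c::countable) node set"
  assumes root: "underivable (\<Gamma>, \<Delta>)"
begin

abbreviation stage where "stage \<equiv> chain (\<Gamma>, \<Delta>)"

definition L where "L = (\<Union>n. fst (stage n))"
definition R where "R = (\<Union>n. snd (stage n))"

lemma underivable_stage: "underivable (stage n)"
  by (induction n) (simp_all add: root step_underivable)

lemma stage_mono: "m \<le> n \<Longrightarrow> stage m \<le> stage n"
  by (rule lift_Suc_mono_le) (simp_all add: step_underivable underivable_stage)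

lemma eventually_in_L:
  assumes "\<phi> \<in> L" shows "\<forall>\<^sub>F n in sequentially. \<phi> \<in> fst (stage n)"
proof -
  obtain m where "\<phi> \<in> fst (stage m)" using assms by (auto simp: L_def)
  then have "\<phi> \<in> fst (stage n)" if "m \<le> n" for n
    using stage_mono[OF that] by (auto simp: less_eq_prod_def)
  then show ?thesis by (auto simp: eventually_sequentially)
qed

lemma eventually_in_R:
  assumes "\<phi> \<in> R" shows "\<forall>\<^sub>F n in sequentially. \<phi> \<in> snd (stage n)"
proof -
  obtain m where "\<phi> \<in> snd (stage m)" using assms by (auto simp: R_def)
  then have "\<phi> \<in> snd (stage n)" if "m \<le> n" for n
    using stage_mono[OF that] by (auto simp: less_eq_prod_def)
  then show ?thesis by (auto simp: eventually_sequentially)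
qed

lemma saturated:
  assumes "\<forall>\<^sub>F n in sequentially. P (stage n)" and "\<And>GD. P GD \<Longrightarrow> rule_premises t GD \<noteq> []"
  shows "\<exists>GD. P GD \<and> (\<exists>(G', D') \<in> set (rule_premises t GD). G' \<subseteq> L \<and> D' \<subseteq> R)"
proof -
  obtain n where "\<forall>m\<ge>n. P (stage m)" using assms(1) by (auto simp: eventually_sequentially)
  moreover obtain m where "m \<ge> n" "schedule m = t" using schedule_recurs by blast
  ultimately have "P (stage m)" and "stage (Suc m) \<in> set (rule_premises t (stage m))"
    using assms(2) step_in_premises[OF underivable_stage] by simp_all
  moreover have "fst (stage (Suc m)) \<subseteq> L" "snd (stage (Suc m)) \<subseteq> R"
    unfolding L_def R_def by blast+
  ultimately show ?thesis
    by (intro exI[of _ "stage m"]) (auto simp: split_beta intro!: bexI[of _ "stage (Suc m)"])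
qed

lemma Ax_formula_not_in_both:
  assumes "\<phi> \<in> L" "\<phi> \<in> R"
    and "(\<exists>i p. \<phi> = NAt i (NProp p)) \<or> (\<exists>i j. \<phi> = NAt i (NNom j)) \<or> (\<exists>i c j. \<phi> = eqn i c j)"
  shows False
proof -
  obtain n where "\<phi> \<in> fst (stage n)" "\<phi> \<in> snd (stage n)"
    using eventually_conj[OF eventually_in_L eventually_in_R, OF assms(1,2)]
    by (auto simp: eventually_sequentially)
  then show False
    using Ax[of \<phi> "fst (stage n)" "snd (stage n)"] assms(3) underivable_stage[of n]
    by (simp add: underivable_def insert_absorb)
qed

lemma Bot_notin_L: "NAt i NBot \<notin> L"
proof
  assume "NAt i NBot \<in> L"
  then obtain n where "NAt i NBot \<in> fst (stage n)" by (auto simp: L_def)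
  then show False
    using Bot[of i "fst (stage n)" "snd (stage n)"] underivable_stage[of n]
    by (simp add: underivable_def insert_absorb)
qed

lemma saturated_AtT: "NAt i (NNom i) \<in> L"
  using saturated[of "\<lambda>_. True" "TAtT i"] by auto

lemma saturated_EqT: "eqn i c i \<in> L"
  using saturated[of "\<lambda>_. True" "TEqT i c"] by auto

lemma saturated_At5:
  assumes "NAt i (NNom j) \<in> L" "NAt i (NNom k) \<in> L" shows "NAt j (NNom k) \<in> L"
  using saturated[of "\<lambda>GD. NAt i (NNom j) \<in> fst GD \<and> NAt i (NNom k) \<in> fst GD" "TAt5 i j k"]
    eventually_conj[OF eventually_in_L eventually_in_L, OF assms]
  by fastforce

lemma saturated_S1_Prop:
  assumes "NAt i (NNom j) \<in> L" "NAt i (NProp p) \<in> L" shows "NAt j (NProp p) \<in> L"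
  using saturated[of "\<lambda>GD. NAt i (NNom j) \<in> fst GD \<and> NAt i (NProp p) \<in> fst GD" "TS1 i j (NProp p)"]
    eventually_conj[OF eventually_in_L eventually_in_L, OF assms]
  by fastforce

lemma saturated_S1_Dia:
  assumes "NAt i (NNom j) \<in> L" "NAt i (NDia a (NNom k)) \<in> L" shows "NAt j (NDia a (NNom k)) \<in> L"
  using saturated[of "\<lambda>GD. NAt i (NNom j) \<in> fst GD \<and> NAt i (NDia a (NNom k)) \<in> fst GD"
      "TS1 i j (NDia a (NNom k))"]
    eventually_conj[OF eventually_in_L eventually_in_L, OF assms]
  by fastforce

lemma saturated_S2:
  assumes "NAt j (NNom k) \<in> L" "NAt i (NDia a (NNom j)) \<in> L" shows "NAt i (NDia a (NNom k)) \<in> L"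
  using saturated[of "\<lambda>GD. NAt j (NNom k) \<in> fst GD \<and> NAt i (NDia a (NNom j)) \<in> fst GD" "TS2 i j k a"]
    eventually_conj[OF eventually_in_L eventually_in_L, OF assms]
  by fastforce

lemma saturated_S3:
  assumes "NAt i (NNom j) \<in> L" "eqn i c k \<in> L" shows "eqn j c k \<in> L"
  using saturated[of "\<lambda>GD. NAt i (NNom j) \<in> fst GD \<and> eqn i c k \<in> fst GD" "TS3 i j k c"]
    eventually_conj[OF eventually_in_L eventually_in_L, OF assms]
  by fastforce

lemma saturated_Eq5:
  assumes "eqn i c j \<in> L" "eqn i c k \<in> L" shows "eqn j c k \<in> L"
  using saturated[of "\<lambda>GD. eqn i c j \<in> fst GD \<and> eqn i c k \<in> fst GD" "TEq5 i j k c"]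
    eventually_conj[OF eventually_in_L eventually_in_L, OF assms]
  by fastforce

lemma saturated_ImpL: "NAt i (NImp \<phi> \<psi>) \<in> L \<Longrightarrow> NAt i \<phi> \<in> R \<or> NAt i \<psi> \<in> L"
  using saturated[of "\<lambda>GD. NAt i (NImp \<phi> \<psi>) \<in> fst GD" "TImpL i \<phi> \<psi>"] eventually_in_L
  by fastforce

lemma saturated_ImpR: "NAt i (NImp \<phi> \<psi>) \<in> R \<Longrightarrow> NAt i \<phi> \<in> L \<and> NAt i \<psi> \<in> R"
  using saturated[of "\<lambda>GD. NAt i (NImp \<phi> \<psi>) \<in> snd GD" "TImpR i \<phi> \<psi>"] eventually_in_R
  by fastforce

lemma saturated_AtL: "NAt j (NAt i \<phi>) \<in> L \<Longrightarrow> NAt i \<phi> \<in> L"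
  using saturated[of "\<lambda>GD. NAt j (NAt i \<phi>) \<in> fst GD" "TAtL j i \<phi>"] eventually_in_L
  by fastforce

lemma saturated_AtR: "NAt j (NAt i \<phi>) \<in> R \<Longrightarrow> NAt i \<phi> \<in> R"
  using saturated[of "\<lambda>GD. NAt j (NAt i \<phi>) \<in> snd GD" "TAtR j i \<phi>"] eventually_in_R
  by fastforce

lemma saturated_DiaL: "NAt i (NDia a \<phi>) \<in> L \<Longrightarrow> \<exists>j. NAt i (NDia a (NNom j)) \<in> L \<and> NAt j \<phi> \<in> L"
  using saturated[of "\<lambda>GD. NAt i (NDia a \<phi>) \<in> fst GD" "TDiaL i a \<phi>"] eventually_in_L
  by (fastforce simp: Let_def)

lemma saturated_DiaR:
  assumes "NAt i (NDia a (NNom j)) \<in> L" "NAt i (NDia a \<phi>) \<in> R" shows "NAt j \<phi> \<in> R"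
  using saturated[of "\<lambda>GD. NAt i (NDia a (NNom j)) \<in> fst GD \<and> NAt i (NDia a \<phi>) \<in> snd GD"
      "TDiaR i a j \<phi>"]
    eventually_conj[OF eventually_in_L eventually_in_R, OF assms]
  by fastforce

lemma saturated_CmpL:
  assumes "NAt i (cmp b \<alpha> c \<beta>) \<in> L"
  shows "\<exists>j k. NAt i (dia \<alpha> (NNom j)) \<in> L \<and> NAt i (dia \<beta> (NNom k)) \<in> L
    \<and> cmp b (PNom j) c (PNom k) \<in> L"
  using saturated[of "\<lambda>GD. NAt i (cmp b \<alpha> c \<beta>) \<in> fst GD" "TCmpL i b \<alpha> c \<beta>"]
    eventually_in_L[OF assms]
  by (fastforce simp: Let_def)

lemma saturated_CmpR:
  assumes "NAt i (dia \<alpha> (NNom j)) \<in> L" "NAt i (dia \<beta> (NNom k)) \<in> L" "NAt i (cmp b \<alpha> c \<beta>) \<in> R"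
  shows "cmp b (PNom j) c (PNom k) \<in> R"
  using saturated[of "\<lambda>GD. NAt i (dia \<alpha> (NNom j)) \<in> fst GD \<and> NAt i (dia \<beta> (NNom k)) \<in> fst GD
      \<and> NAt i (cmp b \<alpha> c \<beta>) \<in> snd GD" "TCmpR i \<alpha> \<beta> j k b c"]
    eventually_conj[OF eventually_in_L eventually_conj[OF eventually_in_L eventually_in_R], OF assms]
  by fastforce

lemma saturated_NEqL: "neqn i c j \<in> L \<Longrightarrow> eqn i c j \<in> R"
  using saturated[of "\<lambda>GD. neqn i c j \<in> fst GD" "TNEqL i c j"] eventually_in_L
  by fastforce

lemma saturated_NEqR: "neqn i c j \<in> R \<Longrightarrow> eqn i c j \<in> L"
  using saturated[of "\<lambda>GD. neqn i c j \<in> snd GD" "TNEqR i c j"] eventually_in_R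
  by fastforce

lemma saturated_Cut: "seq_formula \<phi> \<Longrightarrow> \<phi> \<in> L \<or> \<phi> \<in> R"
  using saturated[of "\<lambda>_. True" "TCut \<phi>"] by fastforce

end

section \<open>The canonical model\<close>

context underivable_root
begin

definition nom_eq :: "'n \<Rightarrow> 'n \<Rightarrow> bool" where
  "nom_eq i j \<longleftrightarrow> NAt i (NNom j) \<in> L"

lemma nom_eq_sym: "nom_eq i j \<Longrightarrow> nom_eq j i"
  unfolding nom_eq_def using saturated_At5[OF _ saturated_AtT] .

lemma nom_eq_trans: "nom_eq i j \<Longrightarrow> nom_eq j k \<Longrightarrow> nom_eq i k"
  unfolding nom_eq_def using saturated_At5 nom_eq_sym[unfolded nom_eq_def] by blast

lemma equivp_nom_eq: "equivp nom_eq"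
  by (rule equivpI) (auto intro: reflpI sympI transpI nom_eq_sym nom_eq_trans
      simp: nom_eq_def saturated_AtT)

definition node_of :: "'n \<Rightarrow> nat" where
  "node_of i = to_nat (SOME k. nom_eq i k)"

lemma node_of_eq_iff: "node_of i = node_of j \<longleftrightarrow> nom_eq i j"
proof
  have rep: "nom_eq i (SOME k. nom_eq i k)" for i
    by (rule someI[of _ i]) (simp add: nom_eq_def saturated_AtT)
  assume "node_of i = node_of j"
  then have "(SOME k. nom_eq i k) = (SOME k. nom_eq j k)" by (simp add: node_of_def)
  then show "nom_eq i j"
    using rep[of i] rep[of j] nom_eq_sym nom_eq_trans by metis
next
  assume "nom_eq i j"
  then have "nom_eq i = nom_eq j" using equivp_nom_eq by (simp add: equivp_def)
  then show "node_of i = node_of j" by (simp add: node_of_def)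
qed

definition canonical_model :: "(nat, 'p, 'n, 'm, 'c) model" where
  "canonical_model =
    \<lparr>Nodes = range node_of,
     Rel = (\<lambda>a x y. \<exists>i j. x = node_of i \<and> y = node_of j \<and> NAt i (NDia a (NNom j)) \<in> L),
     Eqv = (\<lambda>c x y. \<exists>i j. x = node_of i \<and> y = node_of j \<and> eqn i c j \<in> L),
     gval = node_of,
     Val = (\<lambda>p. {node_of i | i. NAt i (NProp p) \<in> L})\<rparr>"

abbreviation M where "M \<equiv> canonical_model"

lemma Nodes_M [simp]: "Nodes M = range node_of"
  and gval_M [simp]: "gval M = node_of"
  by (simp_all add: canonical_model_def)

lemma Val_M_iff: "node_of i \<in> Val M p \<longleftrightarrow> NAt i (NProp p) \<in> L"
proof
  assume "node_of i \<in> Val M p"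
  then obtain i' where "nom_eq i' i" "NAt i' (NProp p) \<in> L"
    using nom_eq_sym by (auto simp: canonical_model_def node_of_eq_iff)
  then show "NAt i (NProp p) \<in> L"
    unfolding nom_eq_def using saturated_S1_Prop by blast
qed (auto simp: canonical_model_def)

lemma Rel_M_iff: "Rel M a (node_of i) (node_of j) \<longleftrightarrow> NAt i (NDia a (NNom j)) \<in> L"
proof
  assume "Rel M a (node_of i) (node_of j)"
  then obtain i' j' where "nom_eq i' i" "nom_eq j' j" "NAt i' (NDia a (NNom j')) \<in> L"
    using nom_eq_sym by (auto simp: canonical_model_def node_of_eq_iff)
  then show "NAt i (NDia a (NNom j)) \<in> L"
    unfolding nom_eq_def using saturated_S1_Dia saturated_S2 by blast
qed (auto simp: canonical_model_def)

lemma eqn_sym: "eqn i c j \<in> L \<Longrightarrow> eqn j c i \<in> L"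
  using saturated_Eq5 saturated_EqT by blast

lemma eqn_trans: "eqn i c j \<in> L \<Longrightarrow> eqn j c k \<in> L \<Longrightarrow> eqn i c k \<in> L"
  using saturated_Eq5 eqn_sym by blast

lemma Eqv_M_iff: "Eqv M c (node_of i) (node_of j) \<longleftrightarrow> eqn i c j \<in> L"
proof
  assume "Eqv M c (node_of i) (node_of j)"
  then obtain i' j' where "nom_eq i' i" "nom_eq j' j" "eqn i' c j' \<in> L"
    using nom_eq_sym by (auto simp: canonical_model_def node_of_eq_iff)
  then show "eqn i c j \<in> L"
    unfolding nom_eq_def using saturated_S3 eqn_sym by blast
qed (auto simp: canonical_model_def)

lemma Eqv_M_in_range: "Eqv M c x y \<Longrightarrow> x \<in> range node_of \<and> y \<in> range node_of"
  by (auto simp: canonical_model_def)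

lemma equiv_Eqv_M: "equiv (Nodes M) {(x, y). Eqv M c x y}"
proof (rule equivI)
  show "{(x, y). Eqv M c x y} \<subseteq> Nodes M \<times> Nodes M"
    using Eqv_M_in_range by auto
  show "refl_on (Nodes M) {(x, y). Eqv M c x y}"
    by (rule refl_onI) (auto simp: Eqv_M_iff saturated_EqT dest: Eqv_M_in_range)
  show "sym {(x, y). Eqv M c x y}"
  proof (rule symI)
    fix x y assume "(x, y) \<in> {(x, y). Eqv M c x y}"
    then show "(y, x) \<in> {(x, y). Eqv M c x y}"
      using Eqv_M_in_range by (fastforce simp: Eqv_M_iff eqn_sym)
  qed
  show "trans {(x, y). Eqv M c x y}"
  proof (rule transI)
    fix x y z assume "(x, y) \<in> {(x, y). Eqv M c x y}" "(y, z) \<in> {(x, y). Eqv M c x y}"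
    moreover obtain i j k where "x = node_of i" "y = node_of j" "z = node_of k"
      using calculation Eqv_M_in_range by blast
    ultimately show "(x, z) \<in> {(x, y). Eqv M c x y}"
      by (auto simp: Eqv_M_iff intro: eqn_trans)
  qed
qed

lemma is_model_M: "is_model M"
  unfolding is_model_def using equiv_Eqv_M by (auto simp: canonical_model_def)

end


section \<open>Truth lemma\<close>

(* <alpha>j is not a subformula of <alpha =c beta>, but it is lighter; the truth lemma is proved
   by induction on this weight. *)
fun weight_p :: "('p, 'n, 'm, 'c) path \<Rightarrow> nat" and weight_n :: "('p, 'n, 'm, 'c) node \<Rightarrow> nat" where
  "weight_p (PMod a) = 2"
| "weight_p (PNom i) = 2"
| "weight_p (PTest \<psi>) = weight_n \<psi> + 6"
| "weight_p (PComp \<alpha> \<beta>) = weight_p \<alpha> + weight_p \<beta>"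
| "weight_n (NProp p) = 1"
| "weight_n (NNom i) = 1"
| "weight_n NBot = 1"
| "weight_n (NImp \<phi> \<psi>) = weight_n \<phi> + weight_n \<psi> + 1"
| "weight_n (NAt i \<phi>) = weight_n \<phi> + 1"
| "weight_n (NDia a \<phi>) = weight_n \<phi> + 1"
| "weight_n (NEq \<alpha> c \<beta>) = weight_p \<alpha> + weight_p \<beta> + 1"
| "weight_n (NNeq \<alpha> c \<beta>) = weight_p \<alpha> + weight_p \<beta> + 1"

lemma weight_dia: "weight_n (dia \<alpha> \<chi>) < weight_p \<alpha> + weight_n \<chi>"
  by (induction \<alpha> \<chi> rule: dia.induct) (auto simp: NConj_def NNeg_def)

lemma weight_dia_nom_less_cmp:
  "weight_n (dia \<alpha> (NNom j)) < weight_n (cmp b \<alpha> c \<beta>)"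
  "weight_n (dia \<beta> (NNom j)) < weight_n (cmp b \<alpha> c \<beta>)"
  using weight_dia[of \<alpha> "NNom j"] weight_dia[of \<beta> "NNom j"] by (cases b; simp)+

lemma nsem_dia:
  "is_model M \<Longrightarrow> n \<in> Nodes M \<Longrightarrow>
    nsem M n (dia \<alpha> \<chi>) \<longleftrightarrow> (\<exists>n' \<in> Nodes M. psem M n n' \<alpha> \<and> nsem M n' \<chi>)"
  by (induction \<alpha> \<chi> arbitrary: n rule: dia.induct) (auto simp: NConj_def NNeg_def is_model_def)

lemma nsem_cmp:
  "nsem M n (cmp b \<alpha> c \<beta>) \<longleftrightarrow>
    (\<exists>n' \<in> Nodes M. \<exists>n'' \<in> Nodes M. psem M n n' \<alpha> \<and> psem M n n'' \<beta> \<and> Eqv M c n' n'' = b)"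
  by (cases b) auto

context underivable_root
begin

definition truthful :: "('p, 'n, 'm, 'c) node \<Rightarrow> bool" where
  "truthful \<phi> \<longleftrightarrow>
    (\<forall>i. (NAt i \<phi> \<in> L \<longrightarrow> nsem M (node_of i) \<phi>) \<and> (NAt i \<phi> \<in> R \<longrightarrow> \<not> nsem M (node_of i) \<phi>))"

lemma truthful_L_iff: "truthful \<phi> \<Longrightarrow> NAt i \<phi> \<in> L \<longleftrightarrow> nsem M (node_of i) \<phi>"
  using saturated_Cut[of "NAt i \<phi>"] by (auto simp: truthful_def)

lemma truthful_Prop: "truthful (NProp p)"
  unfolding truthful_def using Ax_formula_not_in_both[of "NAt _ (NProp p)"] by (auto simp: Val_M_iff)

lemma nsem_M_Nom: "nsem M (node_of i) (NNom j) \<longleftrightarrow> NAt i (NNom j) \<in> L"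
proof -
  have "node_of j = node_of i \<longleftrightarrow> nom_eq i j" using nom_eq_sym node_of_eq_iff by blast
  then show ?thesis by (simp add: nom_eq_def)
qed

lemma truthful_Nom: "truthful (NNom j)"
  unfolding truthful_def nsem_M_Nom using Ax_formula_not_in_both[of "NAt _ (NNom j)"] by blast

lemma truthful_Bot: "truthful NBot"
  by (simp add: truthful_def Bot_notin_L)

lemma truthful_Imp:
  assumes "truthful \<phi>" "truthful \<psi>" shows "truthful (NImp \<phi> \<psi>)"
  unfolding truthful_def
proof (intro allI conjI impI)
  fix i
  assume "NAt i (NImp \<phi> \<psi>) \<in> L"
  then have "NAt i \<phi> \<in> R \<or> NAt i \<psi> \<in> L" by (rule saturated_ImpL)
  with assms show "nsem M (node_of i) (NImp \<phi> \<psi>)" by (auto simp: truthful_def)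
next
  fix i
  assume "NAt i (NImp \<phi> \<psi>) \<in> R"
  then have "NAt i \<phi> \<in> L \<and> NAt i \<psi> \<in> R" by (rule saturated_ImpR)
  with assms show "\<not> nsem M (node_of i) (NImp \<phi> \<psi>)" by (auto simp: truthful_def)
qed

lemma truthful_At: "truthful \<phi> \<Longrightarrow> truthful (NAt j \<phi>)"
  by (auto simp: truthful_def dest: saturated_AtL saturated_AtR)

lemma truthful_Dia:
  assumes "truthful \<phi>" shows "truthful (NDia a \<phi>)"
  unfolding truthful_def
proof (intro allI conjI impI)
  fix i
  assume "NAt i (NDia a \<phi>) \<in> L"
  then obtain j where "NAt i (NDia a (NNom j)) \<in> L" "NAt j \<phi> \<in> L"
    using saturated_DiaL by blast
  with assms show "nsem M (node_of i) (NDia a \<phi>)"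
    by (auto simp: truthful_def Rel_M_iff)
next
  fix i
  assume R: "NAt i (NDia a \<phi>) \<in> R"
  show "\<not> nsem M (node_of i) (NDia a \<phi>)"
  proof
    assume "nsem M (node_of i) (NDia a \<phi>)"
    then obtain j where "Rel M a (node_of i) (node_of j)" "nsem M (node_of j) \<phi>"
      by auto
    with R assms show False
      using saturated_DiaR by (auto simp: truthful_def Rel_M_iff)
  qed
qed

lemma nsem_cmp_nom: "nsem M n (cmp b (PNom j) c (PNom k)) \<longleftrightarrow> Eqv M c (node_of j) (node_of k) = b"
  by (auto simp: nsem_cmp)

lemma cmp_nom_in_L: "cmp b (PNom j) c (PNom k) \<in> L \<Longrightarrow> Eqv M c (node_of j) (node_of k) = b"
  using saturated_NEqL Ax_formula_not_in_both[of "eqn j c k"] by (cases b) (auto simp: Eqv_M_iff)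

lemma cmp_nom_in_R: "cmp b (PNom j) c (PNom k) \<in> R \<Longrightarrow> Eqv M c (node_of j) (node_of k) \<noteq> b"
  using saturated_NEqR Ax_formula_not_in_both[of "eqn j c k"] by (cases b) (auto simp: Eqv_M_iff)

lemma dia_nom_in_L_iff:
  "truthful (dia \<gamma> (NNom j)) \<Longrightarrow> NAt i (dia \<gamma> (NNom j)) \<in> L \<longleftrightarrow> psem M (node_of i) (node_of j) \<gamma>"
  by (auto simp: truthful_L_iff nsem_dia[OF is_model_M])

lemma truthful_cmp:
  assumes \<alpha>: "\<And>j. truthful (dia \<alpha> (NNom j))" and \<beta>: "\<And>j. truthful (dia \<beta> (NNom j))"
  shows "truthful (cmp b \<alpha> c \<beta>)"
  unfolding truthful_def
proof (intro allI conjI impI)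
  fix i
  assume "NAt i (cmp b \<alpha> c \<beta>) \<in> L"
  then obtain j k where "NAt i (dia \<alpha> (NNom j)) \<in> L" "NAt i (dia \<beta> (NNom k)) \<in> L"
      "cmp b (PNom j) c (PNom k) \<in> L"
    using saturated_CmpL by blast
  then have "psem M (node_of i) (node_of j) \<alpha>" "psem M (node_of i) (node_of k) \<beta>"
      "Eqv M c (node_of j) (node_of k) = b"
    using dia_nom_in_L_iff[OF \<alpha>] dia_nom_in_L_iff[OF \<beta>] cmp_nom_in_L by blast+
  then show "nsem M (node_of i) (cmp b \<alpha> c \<beta>)"
    unfolding nsem_cmp Nodes_M by blast
next
  fix i
  assume R: "NAt i (cmp b \<alpha> c \<beta>) \<in> R"
  show "\<not> nsem M (node_of i) (cmp b \<alpha> c \<beta>)"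
  proof
    assume "nsem M (node_of i) (cmp b \<alpha> c \<beta>)"
    then obtain j k where "psem M (node_of i) (node_of j) \<alpha>" "psem M (node_of i) (node_of k) \<beta>"
        "Eqv M c (node_of j) (node_of k) = b"
      by (auto simp: nsem_cmp)
    with R show False
      using dia_nom_in_L_iff[OF \<alpha>] dia_nom_in_L_iff[OF \<beta>] saturated_CmpR cmp_nom_in_R by blast
  qed
qed

lemma truth_lemma: "truthful \<phi>"
proof (induction \<phi> rule: measure_induct_rule[where f = weight_n])
  case (less \<phi>)
  have cmp: "truthful (cmp b \<alpha> c \<beta>)" if "\<phi> = cmp b \<alpha> c \<beta>" for b \<alpha> c \<beta>
    using that by (intro truthful_cmp less.IH) (simp_all add: weight_dia_nom_less_cmp)
  show ?case
  proof (cases \<phi>)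
    case (NImp \<phi>\<^sub>1 \<phi>\<^sub>2)
    then show ?thesis using less.IH by (simp add: truthful_Imp)
  next
    case (NAt j \<psi>)
    then show ?thesis using less.IH by (simp add: truthful_At)
  next
    case (NDia a \<psi>)
    then show ?thesis using less.IH by (simp add: truthful_Dia)
  next
    case (NEq \<alpha> c \<beta>)
    then show ?thesis using cmp[of True \<alpha> c \<beta>] by simp
  next
    case (NNeq \<alpha> c \<beta>)
    then show ?thesis using cmp[of False \<alpha> c \<beta>] by simp
  qed (simp_all add: truthful_Prop truthful_Nom truthful_Bot)
qed

lemma truthful_seq_formula:
  assumes "seq_formula \<phi>"
  shows "(\<phi> \<in> L \<longrightarrow> nsem M n \<phi>) \<and> (\<phi> \<in> R \<longrightarrow> \<not> nsem M n \<phi>)"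
proof -
  consider (At) i \<psi> where "\<phi> = NAt i \<psi>"
    | (Eq) i c j where "\<phi> = cmp True (PNom i) c (PNom j)"
    | (Neq) i c j where "\<phi> = cmp False (PNom i) c (PNom j)"
    using assms unfolding seq_formula_def by auto
  then show ?thesis
  proof cases
    case At
    then show ?thesis using truth_lemma by (simp add: truthful_def)
  qed (use cmp_nom_in_L cmp_nom_in_R nsem_cmp_nom in blast)+
qed

lemma canonical_model_refutes_root:
  "(\<forall>\<gamma> \<in> \<Gamma>. nsem M n \<gamma>) \<and> (\<forall>\<delta> \<in> \<Delta>. \<not> nsem M n \<delta>)"
proof -
  have "\<Gamma> = fst (stage 0)" "\<Delta> = snd (stage 0)" by simp_all
  then have "\<Gamma> \<subseteq> L" "\<Delta> \<subseteq> R" unfolding L_def R_def by blast+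
  then show ?thesis
    using root truthful_seq_formula by (auto simp: underivable_def is_sequent_def)
qed

end

theorem theorem3:
  fixes \<Gamma> \<Delta> :: "('p :: {countable, infinite}, 'n :: {countable, infinite},
                     'm :: finite, 'c :: finite) node set"
  assumes "is_sequent \<Gamma> \<Delta>"
    and "valid_seq \<Gamma> \<Delta>"
  shows "G_prov \<Gamma> \<Delta>"
proof (rule ccontr)
  assume "\<not> G_prov \<Gamma> \<Delta>"
  with assms(1) interpret underivable_root \<Gamma> \<Delta>
    by unfold_locales (simp add: underivable_def)
  obtain n where "n \<in> Nodes M"
    using is_model_M by (auto simp: is_model_def)
  then show False
    using assms(2) is_model_M canonical_model_refutes_root unfolding valid_seq_def by blast
qed

end
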